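(* Let $\mathcal M$ satisfy Assumptions (A), (RE) and (I). Suppose that the distributions $\{\mu_s\}_{s\in\mathcal S}$ are absolutely continuous with respect to Lebesgue measure on $\mathbb R^d$ and have finite second-order moments. If, for some $s,s'\in\mathcal S$, the structural counterfactual operator $T^*_{\langle s'|s\rangle}$ coincides ($\mu_s$-a.e.) with the gradient of a convex function $\phi:\mathbb R^d\to\mathbb R$, then $T^*_{\langle s'|s\rangle}$ is the ($\mu_s$-a.e. unique) solution of $$\min_{T:\ T_\sharp\mu_s=\mu_{s'}}\int_{\mathcal X_s}\|x-T(x)\|^2\,\mathrm d\mu_s(x).$$
   Context: Let $(\Omega,\mathcal A,\mathbb P)$ be a probability space. A structural causal model (SCM) $\mathcal M=\langle U,G\rangle$ consists of two disjoint finite index sets $\mathcal I$ (endogenous) and $\mathcal J$ (exogenous), measurable product spaces $\mathcal V=\prod_{i\in\mathcal I}\mathcal V_i\subseteq\mathbb R^{|\mathcal I|}$ and $\mathcal U=\prod_{j\in\mathcal J}\mathcal U_j\subseteq\mathbb R^{|\mathcal J|}$, a random vector $U:\Omega\to\mathcal U$ (its components need not be independent), and for each $i\in\mathcal I$ subsets $\mathrm{Endo}(i)\subseteq\mathcal I$, $\mathrm{Exo}(i)\subseteq\mathcal J$ (endogenous and exogenous parents) and a measurable map $G_i:\mathcal V_{\mathrm{Endo}(i)}\times\mathcal U_{\mathrm{Exo}(i)}\to\mathcal V_i$. A random vector $V:\Omega\to\mathcal V$ is a solution of $\mathcal M$ if $V_i=G_i(V_{\mathrm{Endo}(i)},U_{\mathrm{Exo}(i)})$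 $\mathbb P$-a.s. for every $i\in\mathcal I$. The graph of $\mathcal M$ has nodes $\mathcal I\cup\mathcal J$ and an edge $k\to l$ iff $l\in\mathcal I$ and $k\in\mathrm{Endo}(l)\cup\mathrm{Exo}(l)$. Assumption (A): the graph of $\mathcal M$ is acyclic; then $\mathcal M$ has a solution, unique up to $\mathbb P$-null sets. For $I\subseteq\mathcal I$ and $v_I\in\mathcal V_I$, the do-intervention $\mathrm{do}(V_I=v_I)$ produces the model $\langle U,\tilde G\rangle$ with $\tilde G_i\equiv v_i$ for $i\in I$ and $\tilde G_i=G_i$ otherwise (same $U$); it is again acyclic, and its solution is denoted $V_{V_I=v_I}$. Standing setting: the solution is $V=(X,S)$ where $X:\Omega\to\mathcal X\subseteq\mathbb R^d$ and $S:\Omega\to\mathcal S$ with $\mathcal S\subset\mathbb R$ finite and $\mathbb P(S=s)>0$ for all $s\in\mathcal S$. $U_X$ denotes the vector of exogenous parents of the components of $X$, and $U_S$ that of $S$. For $s\in\mathcal S$, $X_{S=s}$ denotes the $X$-component of the solution of the model intervened by $\mathrm{do}(S=s)$. Notation: $\mu_s:=\mathcal L(X\mid S=s)$ with support $\mathcal X_s$. Under (A) there is a measurable $F$ with $X=F(S,U_X)$ a.s. and $X_{S=s}=F(s,U_X)$ a.s. for every $s$; set $f_s(u):=F(s,u)$. Assumption (I): the functions $\{f_s\}_{s\in\mathcal S}$ are injective; under (I), the structural counterfactual operator is $T^*_{\langle s'|s\rangle}:=f_{s'}\circ f_s^{-1}|_{\mathcal X_s}$. Assumption (RE): $U_S$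 is independent of $U_X$, and no component of $X$ is an endogenous parent of $S$. $T_\sharp P:=P\circ T^{-1}$. *)

theory Defs
  imports "HOL-Probability.Probability"
begin

abbreviation real_vec_space :: "'i set \<Rightarrow> ('i \<Rightarrow> real) measure" where
  "real_vec_space I \<equiv> PiM I (\<lambda>_. (borel :: real measure))"

text \<open>Graph of the SCM: nodes are Inl i (endogenous) and Inr j (exogenous);
  an edge k -> l iff l is endogenous and k is one of its parents.\<close>
definition scm_graph :: "('i \<Rightarrow> 'i set) \<Rightarrow> ('i \<Rightarrow> 'j set) \<Rightarrow> (('i + 'j) \<times> ('i + 'j)) set" where
  "scm_graph Endo Exo = {(k, Inl l) | k l. k \<in> Inl ` Endo l \<union> Inr ` Exo l}"

definition scm_wf ::
  "('j \<Rightarrow> real set) \<Rightarrow> ('i \<Rightarrow> 'i set) \<Rightarrow> ('i \<Rightarrow> 'j set)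
    \<Rightarrow> ('i \<Rightarrow> ('i \<Rightarrow> real) \<Rightarrow> ('j \<Rightarrow> real) \<Rightarrow> real) \<Rightarrow> bool" where
  "scm_wf Usp Endo Exo G \<longleftrightarrow>
     (\<forall>j. Usp j \<in> sets borel) \<and>
     (\<forall>i. (\<lambda>(v, u). G i v u) \<in> borel_measurable (real_vec_space UNIV \<Otimes>\<^sub>M real_vec_space UNIV)) \<and>
     (\<forall>i v v' u u'. (\<forall>k\<in>Endo i. v k = v' k) \<longrightarrow> (\<forall>j\<in>Exo i. u j = u' j) \<longrightarrow> G i v u = G i v' u')"

definition exo_random_vector :: "'a measure \<Rightarrow> ('j \<Rightarrow> real set) \<Rightarrow> ('a \<Rightarrow> 'j \<Rightarrow> real) \<Rightarrow> bool" where
  "exo_random_vector M Usp U \<longleftrightarrow>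
     U \<in> M \<rightarrow>\<^sub>M real_vec_space UNIV \<and> (\<forall>\<omega>\<in>space M. \<forall>j. U \<omega> j \<in> Usp j)"

definition scm_solution ::
  "'a measure \<Rightarrow> ('a \<Rightarrow> 'j \<Rightarrow> real) \<Rightarrow> ('i \<Rightarrow> ('i \<Rightarrow> real) \<Rightarrow> ('j \<Rightarrow> real) \<Rightarrow> real)
    \<Rightarrow> ('a \<Rightarrow> 'i \<Rightarrow> real) \<Rightarrow> bool" where
  "scm_solution M U G V \<longleftrightarrow>
     V \<in> M \<rightarrow>\<^sub>M real_vec_space UNIV \<and> (AE \<omega> in M. \<forall>i. V \<omega> i = G i (V \<omega>) (U \<omega>))"

definition do_intervention ::
  "('i \<Rightarrow> ('i \<Rightarrow> real) \<Rightarrow> ('j \<Rightarrow> real) \<Rightarrow> real) \<Rightarrow> 'i set \<Rightarrow> ('i \<Rightarrow> real)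
    \<Rightarrow> ('i \<Rightarrow> ('i \<Rightarrow> real) \<Rightarrow> ('j \<Rightarrow> real) \<Rightarrow> real)" where
  "do_intervention G I v = (\<lambda>i. if i \<in> I then (\<lambda>_ _. v i) else G i)"

text \<open>Endogenous indices are 'd option: Some k is the k-th component of X, None is S.\<close>
definition Xof :: "('a \<Rightarrow> 'd option \<Rightarrow> real) \<Rightarrow> 'a \<Rightarrow> real ^ 'd::finite" where
  "Xof V \<omega> = (\<chi> k. V \<omega> (Some k))"

definition Sof :: "('a \<Rightarrow> 'd option \<Rightarrow> real) \<Rightarrow> 'a \<Rightarrow> real" where
  "Sof V \<omega> = V \<omega> None"

definition UX_idx :: "('d option \<Rightarrow> 'j set) \<Rightarrow> 'j set" where
  "UX_idx Exo = (\<Union>k. Exo (Some k))"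

definition US_idx :: "('d option \<Rightarrow> 'j set) \<Rightarrow> 'j set" where
  "US_idx Exo = Exo None"

definition cond_law :: "'a measure \<Rightarrow> ('a \<Rightarrow> 'b::topological_space) \<Rightarrow> ('a \<Rightarrow> real) \<Rightarrow> real \<Rightarrow> 'b measure" where
  "cond_law M X S s = distr (uniform_measure M {\<omega>\<in>space M. S \<omega> = s}) borel X"

definition cf_operator :: "(real \<Rightarrow> ('j \<Rightarrow> real) \<Rightarrow> 'b) \<Rightarrow> ('j \<Rightarrow> real) set \<Rightarrow> real \<Rightarrow> real \<Rightarrow> 'b \<Rightarrow> 'b" where
  "cf_operator F D s' s x = F s' (the_inv_into D (F s) x)"

definition transport_map :: "('b::euclidean_space) measure \<Rightarrow> 'b measure \<Rightarrow> ('b \<Rightarrow> 'b) \<Rightarrow> bool" where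
  "transport_map \<mu> \<nu> T \<longleftrightarrow> T \<in> borel_measurable (completion \<mu>) \<and> distr (completion \<mu>) borel T = \<nu>"

definition quad_cost :: "('b::euclidean_space) measure \<Rightarrow> ('b \<Rightarrow> 'b) \<Rightarrow> ennreal" where
  "quad_cost \<mu> T = (\<integral>\<^sup>+ x. ennreal ((norm (x - T x))\<^sup>2) \<partial>completion \<mu>)"

definition monge_solution :: "('b::euclidean_space) measure \<Rightarrow> 'b measure \<Rightarrow> ('b \<Rightarrow> 'b) \<Rightarrow> bool" where
  "monge_solution \<mu> \<nu> T \<longleftrightarrow> transport_map \<mu> \<nu> T \<and>
     (\<forall>T'. transport_map \<mu> \<nu> T' \<longrightarrow> quad_cost \<mu> T \<le> quad_cost \<mu> T')"

end

theory Submission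
  imports Defs
begin

(*
  Under (A) and (RE) the variable S has no endogenous parents, so S = h(U_S) almost surely.
  Independence of U_S and U_X then makes the law of U_X given S = t equal to the law of U_X,
  hence mu_t is the image of that law under f_t, and T* = f_s' o f_s^-1 pushes mu_s to mu_s'.

  For maps T pushing mu_s to mu_s' the quadratic cost equals
  E|x|^2 + E|y|^2 - 2 E[x . T x], so optimality means maximal correlation. For T0 = grad phi
  with phi convex, integrate the Fenchel-Young inequality
    (x - x0) . (y - p) <= [phi x - phi x0 - p . (x - x0)] + [phi*(y) - x0 . y + phi x0],
  where p is the gradient at a point x0; equality holds exactly when y is a subgradient at x.
  Both brackets are nonnegative, so their integrals make sense in ennreal without any
  integrability of phi or phi*, and the integral of the second bracket depends only on mu_s'.
  Hence T0 maximizes the correlation, and any other maximizer is a.e. a subgradient of phi,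
  i.e. equal to T0.
*)

section \<open>Gradients of convex functions\<close>

lemma gderiv_has_real_derivative_along_line:
  fixes \<phi> :: "'a::real_inner \<Rightarrow> real"
  assumes "GDERIV \<phi> x :> g"
  shows "((\<lambda>t. \<phi> (x + t *\<^sub>R v)) has_real_derivative (g \<bullet> v)) (at 0)"
proof -
  have line: "((\<lambda>t::real. x + t *\<^sub>R v) has_derivative (\<lambda>t. t *\<^sub>R v)) (at 0)"
    by (auto intro!: derivative_eq_intros)
  have "(\<phi> has_derivative (\<lambda>h. h \<bullet> g)) (at (x + 0 *\<^sub>R v))"
    using assms by (simp add: gderiv_def)
  from diff_chain_at[OF line this]
  have "((\<lambda>t. \<phi> (x + t *\<^sub>R v)) has_derivative (\<lambda>t. (t *\<^sub>R v) \<bullet> g)) (at 0)"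
    by (simp add: o_def)
  moreover have "(\<lambda>t. (t *\<^sub>R v) \<bullet> g) = (*) (g \<bullet> v)"
    by (auto simp: fun_eq_iff inner_commute)
  ultimately show ?thesis
    by (simp add: has_field_derivative_def)
qed

lemma convex_on_gderiv_above_tangent:
  fixes \<phi> :: "'a::real_inner \<Rightarrow> real"
  assumes cvx: "convex_on UNIV \<phi>" and d: "GDERIV \<phi> x :> g"
  shows "\<phi> x + g \<bullet> (z - x) \<le> \<phi> z"
proof -
  define \<psi> where "\<psi> t = \<phi> (x + t *\<^sub>R (z - x))" for t
  have "convex_on UNIV \<psi>"
  proof (rule convex_onI)
    fix t a b :: real
    assume "0 < t" "t < 1"
    have "(1 - t) *\<^sub>R (x + a *\<^sub>R (z - x)) + t *\<^sub>R (x + b *\<^sub>R (z - x))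
        = x + ((1 - t) * a + t * b) *\<^sub>R (z - x)"
      by (simp add: algebra_simps)
    with convex_onD[OF cvx, of t "x + a *\<^sub>R (z - x)" "x + b *\<^sub>R (z - x)"] \<open>0 < t\<close> \<open>t < 1\<close>
    show "\<psi> ((1 - t) *\<^sub>R a + t *\<^sub>R b) \<le> (1 - t) * \<psi> a + t * \<psi> b"
      by (simp add: \<psi>_def)
  qed simp
  moreover have "(\<psi> has_real_derivative (g \<bullet> (z - x))) (at 0 within UNIV)"
    unfolding \<psi>_def using gderiv_has_real_derivative_along_line[OF d] by simp
  ultimately have "g \<bullet> (z - x) * (1 - 0) \<le> \<psi> 1 - \<psi> 0"
    by (intro convex_on_imp_above_tangent) auto
  then show ?thesis by (simp add: \<psi>_def)
qed

lemma gderiv_unique_subgradient: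
  fixes \<phi> :: "'a::real_inner \<Rightarrow> real"
  assumes d: "GDERIV \<phi> x :> g" and sub: "\<And>z. \<phi> x + y \<bullet> (z - x) \<le> \<phi> z"
  shows "y = g"
proof -
  define v where "v = y - g"
  have "((\<lambda>h. (\<phi> (x + h *\<^sub>R v) - \<phi> x) / h) \<longlongrightarrow> g \<bullet> v) (at 0)"
    using gderiv_has_real_derivative_along_line[OF d] by (simp add: has_field_derivative_iff)
  then have lim: "((\<lambda>h. (\<phi> (x + h *\<^sub>R v) - \<phi> x) / h) \<longlongrightarrow> g \<bullet> v) (at_right 0)"
    by (rule filterlim_mono) (auto simp: at_le)
  have "eventually (\<lambda>h. y \<bullet> v \<le> (\<phi> (x + h *\<^sub>R v) - \<phi> x) / h) (at_right (0::real))"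
  proof (rule eventually_at_rightI[of 0 1])
    fix h :: real assume h: "h \<in> {0<..<1}"
    have "h * (y \<bullet> v) \<le> \<phi> (x + h *\<^sub>R v) - \<phi> x"
      using sub[of "x + h *\<^sub>R v"] by simp
    with h show "y \<bullet> v \<le> (\<phi> (x + h *\<^sub>R v) - \<phi> x) / h"
      by (simp add: pos_le_divide_eq mult.commute)
  qed simp
  then have "y \<bullet> v \<le> g \<bullet> v"
    by (rule tendsto_lowerbound[OF lim]) simp
  then have "v \<bullet> v \<le> 0"
    by (simp add: v_def inner_diff_left)
  then show ?thesis
    unfolding v_def by (metis eq_iff_diff_eq_0 inner_gt_zero_iff not_le)
qed

text \<open>The Legendre conjugate \<open>\<phi>\<^sup>*(y)\<close> shifted by \<open>\<phi>(x0) - x0 \<bullet> y\<close>, hence nonnegative.\<close>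
definition conjugate_at :: "('a::real_inner \<Rightarrow> real) \<Rightarrow> 'a \<Rightarrow> 'a \<Rightarrow> ennreal" where
  "conjugate_at \<phi> x0 y = (SUP z. ennreal ((z - x0) \<bullet> y - (\<phi> z - \<phi> x0)))"

definition tangent_gap :: "('a::real_inner \<Rightarrow> real) \<Rightarrow> 'a \<Rightarrow> 'a \<Rightarrow> 'a \<Rightarrow> real" where
  "tangent_gap \<phi> x0 p x = \<phi> x - \<phi> x0 - p \<bullet> (x - x0)"

lemma tangent_gap_add_conjugate_term:
  "tangent_gap \<phi> x0 p x + ((x - x0) \<bullet> y - (\<phi> x - \<phi> x0)) = (x - x0) \<bullet> (y - p)"
  by (simp add: tangent_gap_def inner_diff_left inner_diff_right inner_commute)

lemma tangent_gap_nonneg: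
  "convex_on UNIV \<phi> \<Longrightarrow> GDERIV \<phi> x0 :> p \<Longrightarrow> 0 \<le> tangent_gap \<phi> x0 p x"
  using convex_on_gderiv_above_tangent[of \<phi> x0 p x] by (simp add: tangent_gap_def)

lemma ennreal_add_le: "ennreal (a + b) \<le> ennreal a + ennreal b"
  by (auto simp: ennreal_plus_if intro!: ennreal_leI)

lemma fenchel_young_conjugate_at:
  "ennreal ((x - x0) \<bullet> (y - p)) \<le> ennreal (tangent_gap \<phi> x0 p x) + conjugate_at \<phi> x0 y"
proof -
  have "ennreal ((x - x0) \<bullet> y - (\<phi> x - \<phi> x0)) \<le> conjugate_at \<phi> x0 y"
    unfolding conjugate_at_def by (rule SUP_upper) simp
  then have "ennreal (tangent_gap \<phi> x0 p x) + ennreal ((x - x0) \<bullet> y - (\<phi> x - \<phi> x0))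
      \<le> ennreal (tangent_gap \<phi> x0 p x) + conjugate_at \<phi> x0 y"
    by (rule add_left_mono)
  with ennreal_add_le show ?thesis
    unfolding tangent_gap_add_conjugate_term[of \<phi> x0 p x y, symmetric] by (rule order_trans)
qed

lemma conjugate_at_gderiv:
  assumes "convex_on UNIV \<phi>" and "GDERIV \<phi> x :> y"
  shows "conjugate_at \<phi> x0 y = ennreal ((x - x0) \<bullet> y - (\<phi> x - \<phi> x0))"
  unfolding conjugate_at_def
proof (rule antisym)
  have "(z - x0) \<bullet> y - (\<phi> z - \<phi> x0) \<le> (x - x0) \<bullet> y - (\<phi> x - \<phi> x0)" for z
    using convex_on_gderiv_above_tangent[OF assms, of z]
    by (simp add: inner_diff_left inner_diff_right inner_commute)
  then show "(SUP z. ennreal ((z - x0) \<bullet> y - (\<phi> z - \<phi> x0))) \<le> ennreal ((x - x0) \<bullet> y - (\<phi> x - \<phi> x0))"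
    by (auto intro!: SUP_least ennreal_leI)
qed (rule SUP_upper, simp)

lemma fenchel_young_eq_gderiv:
  assumes cvx: "convex_on UNIV \<phi>" and dx: "GDERIV \<phi> x :> y" and d0: "GDERIV \<phi> x0 :> p"
  shows "ennreal (tangent_gap \<phi> x0 p x) + conjugate_at \<phi> x0 y = ennreal ((x - x0) \<bullet> (y - p))"
    and "0 \<le> (x - x0) \<bullet> (y - p)"
proof -
  have t: "0 \<le> (x - x0) \<bullet> y - (\<phi> x - \<phi> x0)"
    using convex_on_gderiv_above_tangent[OF cvx dx, of x0]
    by (simp add: inner_diff_left inner_diff_right inner_commute)
  show "ennreal (tangent_gap \<phi> x0 p x) + conjugate_at \<phi> x0 y = ennreal ((x - x0) \<bullet> (y - p))"
    unfolding conjugate_at_gderiv[OF cvx dx] tangent_gap_add_conjugate_term[of \<phi> x0 p x y, symmetric]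
    by (rule ennreal_plus[symmetric, OF tangent_gap_nonneg[OF cvx d0] t])
  show "0 \<le> (x - x0) \<bullet> (y - p)"
    using tangent_gap_add_conjugate_term[of \<phi> x0 p x y] tangent_gap_nonneg[OF cvx d0, of x] t
    by linarith
qed

lemma subgradient_of_fenchel_young_eq:
  assumes gap: "0 \<le> tangent_gap \<phi> x0 p x" and pos: "0 \<le> (x - x0) \<bullet> (y - p)"
    and eq: "ennreal (tangent_gap \<phi> x0 p x) + conjugate_at \<phi> x0 y \<le> ennreal ((x - x0) \<bullet> (y - p))"
  shows "\<phi> x + y \<bullet> (z - x) \<le> \<phi> z"
proof -
  define t where "t w = (w - x0) \<bullet> y - (\<phi> w - \<phi> x0)" for w
  have sum: "tangent_gap \<phi> x0 p x + t x = (x - x0) \<bullet> (y - p)"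
    unfolding t_def by (rule tangent_gap_add_conjugate_term)
  have upper: "ennreal (t w) \<le> conjugate_at \<phi> x0 y" for w
    unfolding conjugate_at_def t_def by (rule SUP_upper) simp
  have le: "t w \<le> t x" if "0 \<le> t w" for w
  proof -
    have "ennreal (tangent_gap \<phi> x0 p x + t w) \<le> ennreal (tangent_gap \<phi> x0 p x + t x)"
      using order_trans[OF add_left_mono[OF upper] eq] sum ennreal_plus[OF gap that] by simp
    then show ?thesis
      using pos sum by (simp add: ennreal_le_iff)
  qed
  have "0 \<le> t x"
    using le[of x0] by (simp add: t_def)
  then have "t z \<le> t x"
    using le[of z] by linarith
  then show ?thesis
    by (simp add: t_def inner_diff_left inner_diff_right inner_commute)
qed

lemma borel_measurable_conjugate_at:
  fixes \<phi> :: "'a::euclidean_space \<Rightarrow> real"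
  assumes cont: "continuous_on UNIV \<phi>"
  shows "conjugate_at \<phi> x0 \<in> borel_measurable borel"
proof -
  obtain D :: "'a set" where D: "countable D" "\<And>X. open X \<Longrightarrow> X \<noteq> {} \<Longrightarrow> \<exists>d\<in>D. d \<in> X"
    using countable_dense_exists by blast
  define h where "h y z = ennreal ((z - x0) \<bullet> y - (\<phi> z - \<phi> x0))" for y z
  have "z \<in> closure D" for z
    unfolding closure_approachable
  proof (intro allI impI)
    fix e :: real assume "0 < e"
    then obtain d where "d \<in> D" "d \<in> ball z e" using D(2)[of "ball z e"] by auto
    then show "\<exists>y\<in>D. dist y z < e" by (auto simp: dist_commute)
  qed
  then have dense_SUP: "conjugate_at \<phi> x0 y = (SUP z\<in>D. h y z)" for y
    unfolding conjugate_at_def h_def[symmetric]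
  proof (intro antisym SUP_least)
    fix z
    assume "\<And>z. z \<in> closure D"
    then obtain d where d: "\<And>n. d n \<in> D" "d \<longlonglongrightarrow> z"
      unfolding closure_sequential by blast
    have "continuous_on UNIV (\<lambda>z. (z - x0) \<bullet> y - (\<phi> z - \<phi> x0))"
      by (intro continuous_intros cont)
    from continuous_on_tendsto_compose[OF this d(2)]
    have "(\<lambda>n. h y (d n)) \<longlonglongrightarrow> h y z"
      unfolding h_def by (intro tendsto_ennrealI) simp
    then show "h y z \<le> (SUP z\<in>D. h y z)"
      by (rule LIMSEQ_le_const2) (auto intro!: SUP_upper d(1))
  qed (auto intro!: SUP_upper)
  have "(\<lambda>y. h y z) \<in> borel_measurable borel" for z
    unfolding h_def by measurable
  then show ?thesis
    unfolding dense_SUP[abs_def] by (rule borel_measurable_SUP[OF D(1)])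
qed

lemma borel_measurable_tangent_gap:
  "continuous_on UNIV \<phi> \<Longrightarrow> tangent_gap \<phi> x0 p \<in> borel_measurable borel"
  unfolding tangent_gap_def[abs_def]
  by (intro borel_measurable_continuous_onI continuous_intros)

definition gradient_limit :: "('a::euclidean_space \<Rightarrow> real) \<Rightarrow> 'a \<Rightarrow> 'a" where
  "gradient_limit \<phi> x =
     (\<Sum>b\<in>Basis. lim (\<lambda>n. (\<phi> (x + inverse (real (Suc n)) *\<^sub>R b) - \<phi> x) / inverse (real (Suc n))) *\<^sub>R b)"

lemma borel_measurable_gradient_limit:
  fixes \<phi> :: "'a::euclidean_space \<Rightarrow> real"
  assumes cont: "continuous_on UNIV \<phi>"
  shows "gradient_limit \<phi> \<in> borel_measurable borel"
proof -
  have "(\<lambda>x. (\<phi> (x + inverse (real (Suc n)) *\<^sub>R b) - \<phi> x) / inverse (real (Suc n)))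
      \<in> borel_measurable borel" for n and b :: 'a
    by (intro borel_measurable_continuous_onI continuous_intros continuous_on_compose2[OF cont]) auto
  then show ?thesis
    unfolding gradient_limit_def
    by (intro borel_measurable_sum borel_measurable_scaleR borel_measurable_lim_metric
        borel_measurable_const)
qed

lemma gradient_limit_eq:
  fixes \<phi> :: "'a::euclidean_space \<Rightarrow> real"
  assumes d: "GDERIV \<phi> x :> g"
  shows "gradient_limit \<phi> x = g"
proof -
  have "lim (\<lambda>n. (\<phi> (x + inverse (real (Suc n)) *\<^sub>R b) - \<phi> x) / inverse (real (Suc n))) = g \<bullet> b"
    for b
  proof (rule limI)
    have quotient: "((\<lambda>h. (\<phi> (x + h *\<^sub>R b) - \<phi> x) / h) \<longlongrightarrow> g \<bullet> b) (at 0)"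
      using gderiv_has_real_derivative_along_line[OF d] by (simp add: has_field_derivative_iff)
    have "filterlim (\<lambda>n. inverse (real (Suc n))) (at 0) sequentially"
      unfolding filterlim_at using LIMSEQ_inverse_real_of_nat by auto
    from filterlim_compose[OF quotient this]
    show "(\<lambda>n. (\<phi> (x + inverse (real (Suc n)) *\<^sub>R b) - \<phi> x) / inverse (real (Suc n)))
        \<longlonglongrightarrow> g \<bullet> b"
      by (simp add: o_def)
  qed
  then show ?thesis
    by (simp add: gradient_limit_def euclidean_representation)
qed

lemma measurable_completion_AE_eq:
  fixes f g :: "'a \<Rightarrow> 'b::topological_space"
  assumes g: "g \<in> borel_measurable M" and ae: "AE x in M. f x = g x"
  shows "f \<in> borel_measurable (completion M)"
proof (rule measurableI)
  fix A :: "'b set" assume A: "A \<in> sets borel"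
  have "AE x in completion M. (x \<in> g -` A \<inter> space M) = (x \<in> f -` A \<inter> space M)"
    using AE_completion[OF ae] by (rule eventually_mono) simp
  moreover have "g -` A \<inter> space M \<in> sets (completion M)"
    using measurable_sets[OF g A] by simp
  ultimately have "f -` A \<inter> space M \<in> sets (completion M)"
    by (rule completion.in_sets_AE) auto
  then show "f -` A \<inter> space (completion M) \<in> sets (completion M)" by simp
qed simp

lemma distr_completion_AE_eq:
  assumes g: "g \<in> borel_measurable M" and ae: "AE x in M. f x = g x"
  shows "distr (completion M) borel f = distr M borel g"
proof -
  have "distr (completion M) borel f = distr (completion M) borel g"
    by (rule distr_cong_AE[OF refl refl AE_completion[OF ae]
          measurable_completion_AE_eq[OF g ae] measurable_completion[OF g]])
  also have "\<dots> = distr M borel g"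
    by (rule distr_completion[OF g])
  finally show ?thesis .
qed

lemma gderiv_eq_of_fenchel_young_eq:
  assumes cvx: "convex_on UNIV \<phi>" and d0: "GDERIV \<phi> x0 :> p" and d: "GDERIV \<phi> x :> g"
    and pos: "0 \<le> (x - x0) \<bullet> (y - p)"
    and eq: "ennreal (tangent_gap \<phi> x0 p x) + conjugate_at \<phi> x0 y = ennreal ((x - x0) \<bullet> (y - p))"
  shows "y = g"
proof (rule gderiv_unique_subgradient[OF d])
  show "\<phi> x + y \<bullet> (z - x) \<le> \<phi> z" for z
    using tangent_gap_nonneg[OF cvx d0] pos eq by (intro subgradient_of_fenchel_young_eq) auto
qed

section \<open>Quadratic optimal transport\<close>

lemma integral_le_of_ennreal_le:
  fixes f h :: "'a \<Rightarrow> real"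
  assumes f: "integrable M f" and h: "integrable M h" and h_nonneg: "AE x in M. 0 \<le> h x"
    and le: "AE x in M. ennreal (f x) \<le> g x"
    and g_le: "(\<integral>\<^sup>+x. g x \<partial>M) \<le> (\<integral>\<^sup>+x. ennreal (h x) \<partial>M)"
  shows "(\<integral>x. f x \<partial>M) \<le> (\<integral>x. h x \<partial>M)"
proof -
  have f_pos: "integrable M (\<lambda>x. max (f x) 0)"
    using f by auto
  have "(\<integral>\<^sup>+x. ennreal (max (f x) 0) \<partial>M) = ennreal (\<integral>x. max (f x) 0 \<partial>M)"
    by (rule nn_integral_eq_integral[OF f_pos]) auto
  then have "ennreal (\<integral>x. max (f x) 0 \<partial>M) = (\<integral>\<^sup>+x. ennreal (f x) \<partial>M)"
    by (simp add: ennreal_max_0')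
  also have "\<dots> \<le> (\<integral>\<^sup>+x. g x \<partial>M)"
    using le by (rule nn_integral_mono_AE)
  also have "\<dots> \<le> ennreal (\<integral>x. h x \<partial>M)"
    using g_le nn_integral_eq_integral[OF h h_nonneg] by simp
  finally have "(\<integral>x. max (f x) 0 \<partial>M) \<le> (\<integral>x. h x \<partial>M)"
    using integral_nonneg_AE[OF h_nonneg] by (simp add: ennreal_le_iff)
  moreover have "(\<integral>x. f x \<partial>M) \<le> (\<integral>x. max (f x) 0 \<partial>M)"
    by (intro integral_mono f f_pos) auto
  ultimately show ?thesis by linarith
qed

lemma AE_eq_of_integral_eq_ennreal_le:
  fixes f h :: "'a \<Rightarrow> real"
  assumes f: "integrable M f" and h: "integrable M h" and h_nonneg: "AE x in M. 0 \<le> h x"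
    and g: "g \<in> borel_measurable M" and le: "AE x in M. ennreal (f x) \<le> g x"
    and g_le: "(\<integral>\<^sup>+x. g x \<partial>M) \<le> (\<integral>\<^sup>+x. ennreal (h x) \<partial>M)"
    and eq: "(\<integral>x. f x \<partial>M) = (\<integral>x. h x \<partial>M)"
  shows "AE x in M. 0 \<le> f x \<and> g x = ennreal (f x)"
proof -
  have f_pos: "integrable M (\<lambda>x. max (f x) 0)"
    using f by auto
  have "(\<integral>x. max (f x) 0 \<partial>M) \<le> (\<integral>x. f x \<partial>M)"
    using integral_le_of_ennreal_le[OF f_pos h h_nonneg _ g_le] le eq
    by (simp add: ennreal_max_0')
  moreover have "(\<integral>x. f x \<partial>M) \<le> (\<integral>x. max (f x) 0 \<partial>M)"
    by (intro integral_mono f f_pos) auto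
  ultimately have "(\<integral>x. max (f x) 0 - f x \<partial>M) = 0"
    using f f_pos by simp
  then have "AE x in M. max (f x) 0 - f x = 0"
    using f f_pos by (subst (asm) integral_nonneg_eq_0_iff_AE) auto
  then have f_nonneg: "AE x in M. 0 \<le> f x"
    by eventually_elim (auto simp: max_def split: if_splits)
  have f_eq: "(\<integral>\<^sup>+x. ennreal (f x) \<partial>M) = (\<integral>\<^sup>+x. ennreal (h x) \<partial>M)"
    using nn_integral_eq_integral[OF f f_nonneg] nn_integral_eq_integral[OF h h_nonneg] eq by simp
  have "(\<integral>\<^sup>+x. g x - ennreal (f x) \<partial>M) = (\<integral>\<^sup>+x. g x \<partial>M) - (\<integral>\<^sup>+x. ennreal (f x) \<partial>M)"
    using g le f_eq nn_integral_eq_integral[OF h h_nonneg] borel_measurable_integrable[OF f]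
    by (intro nn_integral_diff) auto
  also have "\<dots> = 0"
    using g_le f_eq nn_integral_eq_integral[OF h h_nonneg]
    by (intro diff_eq_0_ennreal) (auto simp: order_le_less_trans)
  finally have "AE x in M. g x - ennreal (f x) = 0"
    using g borel_measurable_integrable[OF f] by (subst (asm) nn_integral_0_iff_AE) auto
  with f_nonneg le show ?thesis
    by eventually_elim (auto dest: ennreal_minus_eq_0 intro: antisym)
qed

lemma integrable_inner_square_integrable:
  fixes f g :: "'a \<Rightarrow> 'b::euclidean_space"
  assumes "f \<in> borel_measurable M" "g \<in> borel_measurable M"
    and "integrable M (\<lambda>x. (norm (f x))\<^sup>2)" "integrable M (\<lambda>x. (norm (g x))\<^sup>2)"
  shows "integrable M (\<lambda>x. f x \<bullet> g x)"
proof (rule Bochner_Integration.integrable_bound)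
  show "integrable M (\<lambda>x. (norm (f x))\<^sup>2 + (norm (g x))\<^sup>2)"
    using assms by auto
  have "\<bar>a \<bullet> b\<bar> \<le> (norm a)\<^sup>2 + (norm b)\<^sup>2" for a b :: 'b
    using Cauchy_Schwarz_ineq2[of a b] sum_squares_bound[of "norm a" "norm b"]
      mult_nonneg_nonneg[OF norm_ge_zero norm_ge_zero, of a b] by linarith
  then show "AE x in M. norm (f x \<bullet> g x) \<le> norm ((norm (f x))\<^sup>2 + (norm (g x))\<^sup>2)"
    by (intro AE_I2) simp
qed (use assms in measurable)

context
  fixes N \<nu> :: "'a::euclidean_space measure"
  assumes prob_N: "prob_space N" and id_N: "(\<lambda>x. x) \<in> borel_measurable N"
    and N_sq: "integrable N (\<lambda>x. (norm x)\<^sup>2)" and \<nu>_sq: "integrable \<nu> (\<lambda>y. (norm y)\<^sup>2)"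
begin

lemma integrable_square_norm_pushforward:
  assumes T: "T \<in> borel_measurable N" "distr N borel T = \<nu>"
  shows "integrable N (\<lambda>x. (norm (T x))\<^sup>2)"
  using \<nu>_sq T integrable_distr_eq[OF T(1), of "\<lambda>y. (norm y)\<^sup>2"] by simp

lemma integrable_inner_pushforward:
  assumes T: "T \<in> borel_measurable N" "distr N borel T = \<nu>"
  shows "integrable N (\<lambda>x. x \<bullet> T x)" and "integrable N (\<lambda>x. a \<bullet> T x)"
proof -
  interpret N: prob_space N by (rule prob_N)
  show "integrable N (\<lambda>x. x \<bullet> T x)" "integrable N (\<lambda>x. a \<bullet> T x)"
    using T(1) id_N N_sq integrable_square_norm_pushforward[OF T]
    by (auto intro!: integrable_inner_square_integrable)
qed

lemma integral_square_dist_pushforward: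
  assumes T: "T \<in> borel_measurable N" "distr N borel T = \<nu>"
  shows "integrable N (\<lambda>x. (norm (x - T x))\<^sup>2)"
    and "(\<integral>x. (norm (x - T x))\<^sup>2 \<partial>N)
           = (\<integral>x. (norm x)\<^sup>2 \<partial>N) + (\<integral>y. (norm y)\<^sup>2 \<partial>\<nu>) - 2 * (\<integral>x. x \<bullet> T x \<partial>N)"
proof -
  have expand: "(norm (x - T x))\<^sup>2 = (norm x)\<^sup>2 + (norm (T x))\<^sup>2 - 2 * (x \<bullet> T x)" for x
    by (simp add: power2_norm_eq_inner inner_diff_left inner_diff_right inner_commute)
  note ints = N_sq integrable_square_norm_pushforward[OF T] integrable_inner_pushforward(1)[OF T]
  show "integrable N (\<lambda>x. (norm (x - T x))\<^sup>2)"
    unfolding expand using ints by auto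
  have "(\<integral>x. (norm (T x))\<^sup>2 \<partial>N) = (\<integral>y. (norm y)\<^sup>2 \<partial>\<nu>)"
    using integral_distr[OF T(1), of "\<lambda>y. (norm y)\<^sup>2"] T(2) by simp
  then show "(\<integral>x. (norm (x - T x))\<^sup>2 \<partial>N)
      = (\<integral>x. (norm x)\<^sup>2 \<partial>N) + (\<integral>y. (norm y)\<^sup>2 \<partial>\<nu>) - 2 * (\<integral>x. x \<bullet> T x \<partial>N)"
    unfolding expand using ints by simp
qed

lemma integral_inner_shifted_pushforward:
  assumes T: "T \<in> borel_measurable N" "distr N borel T = \<nu>"
  shows "integrable N (\<lambda>x. (x - x0) \<bullet> (T x - p))"
    and "(\<integral>x. (x - x0) \<bullet> (T x - p) \<partial>N)
           = (\<integral>x. x \<bullet> T x \<partial>N) - (\<integral>y. x0 \<bullet> y \<partial>\<nu>) - (\<integral>x. p \<bullet> x \<partial>N) + x0 \<bullet> p"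
proof -
  interpret N: prob_space N by (rule prob_N)
  have expand: "(x - x0) \<bullet> (T x - p) = x \<bullet> T x - x0 \<bullet> T x - p \<bullet> x + x0 \<bullet> p" for x
    by (simp add: inner_diff_left inner_diff_right inner_commute)
  have int_p: "integrable N (\<lambda>x. p \<bullet> x)"
    using id_N N_sq by (intro integrable_inner_square_integrable) auto
  note ints = integrable_inner_pushforward[OF T] int_p
  show "integrable N (\<lambda>x. (x - x0) \<bullet> (T x - p))"
    unfolding expand using ints by auto
  have "(\<integral>x. x0 \<bullet> T x \<partial>N) = (\<integral>y. x0 \<bullet> y \<partial>\<nu>)"
    using integral_distr[OF T(1), of "\<lambda>y. x0 \<bullet> y"] T(2) by simp
  then show "(\<integral>x. (x - x0) \<bullet> (T x - p) \<partial>N)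
      = (\<integral>x. x \<bullet> T x \<partial>N) - (\<integral>y. x0 \<bullet> y \<partial>\<nu>) - (\<integral>x. p \<bullet> x \<partial>N) + x0 \<bullet> p"
    unfolding expand using ints by (simp add: N.prob_space)
qed

lemma nn_integral_fenchel_young_pushforward:
  assumes T: "T \<in> borel_measurable N" "distr N borel T = \<nu>"
    and cont: "continuous_on UNIV \<phi>"
  shows "(\<integral>\<^sup>+x. ennreal (tangent_gap \<phi> x0 p x) + conjugate_at \<phi> x0 (T x) \<partial>N)
           = (\<integral>\<^sup>+x. ennreal (tangent_gap \<phi> x0 p x) \<partial>N) + (\<integral>\<^sup>+y. conjugate_at \<phi> x0 y \<partial>\<nu>)"
proof -
  have "(\<lambda>x. ennreal (tangent_gap \<phi> x0 p x)) \<in> borel_measurable N"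
    using borel_measurable_tangent_gap[OF cont] id_N by measurable
  moreover have "(\<integral>\<^sup>+x. conjugate_at \<phi> x0 (T x) \<partial>N) = (\<integral>\<^sup>+y. conjugate_at \<phi> x0 y \<partial>\<nu>)"
    unfolding T(2)[symmetric]
    by (rule nn_integral_distr[symmetric, OF T(1)]) (simp add: borel_measurable_conjugate_at[OF cont])
  ultimately show ?thesis
    using measurable_compose[OF T(1) borel_measurable_conjugate_at[OF cont]]
    by (simp add: nn_integral_add)
qed

lemma integral_inner_le_gderiv_convex:
  assumes T: "T \<in> borel_measurable N" "distr N borel T = \<nu>"
    and T0: "T0 \<in> borel_measurable N" "distr N borel T0 = \<nu>"
    and cvx: "convex_on UNIV \<phi>" and grad: "AE x in N. GDERIV \<phi> x :> T0 x"
  shows "(\<integral>x. x \<bullet> T x \<partial>N) \<le> (\<integral>x. x \<bullet> T0 x \<partial>N)"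
    and "(\<integral>x. x \<bullet> T x \<partial>N) = (\<integral>x. x \<bullet> T0 x \<partial>N) \<Longrightarrow> AE x in N. T x = T0 x"
proof -
  interpret N: prob_space N by (rule prob_N)
  have cont: "continuous_on UNIV \<phi>"
    by (rule convex_on_continuous[OF open_UNIV cvx])
  obtain x0 where d0: "GDERIV \<phi> x0 :> T0 x0"
    using grad N.AE_False by (metis (mono_tags) eventually_mono)
  define p where "p = T0 x0"
  define bound where "bound S x = ennreal (tangent_gap \<phi> x0 p x) + conjugate_at \<phi> x0 (S x)" for S x
  define pairing where "pairing S x = (x - x0) \<bullet> (S x - p)" for S x
  note fy = fenchel_young_eq_gderiv[OF cvx _ d0[folded p_def]]
  have T0_eq: "AE x in N. 0 \<le> pairing T0 x \<and> bound T0 x = ennreal (pairing T0 x)"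
    using grad by eventually_elim (simp add: bound_def pairing_def fy)
  have "(\<integral>\<^sup>+x. bound T x \<partial>N) = (\<integral>\<^sup>+x. bound T0 x \<partial>N)"
    unfolding bound_def nn_integral_fenchel_young_pushforward[OF T cont]
      nn_integral_fenchel_young_pushforward[OF T0 cont] ..
  also have "\<dots> = (\<integral>\<^sup>+x. ennreal (pairing T0 x) \<partial>N)"
    using T0_eq by (intro nn_integral_cong_AE) auto
  finally have bound_le: "(\<integral>\<^sup>+x. bound T x \<partial>N) \<le> (\<integral>\<^sup>+x. ennreal (pairing T0 x) \<partial>N)"
    by simp
  have fy_le: "AE x in N. ennreal (pairing T x) \<le> bound T x"
    by (simp add: pairing_def bound_def fenchel_young_conjugate_at)
  note int = integral_inner_shifted_pushforward[OF T, of x0 p, folded pairing_def]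
    integral_inner_shifted_pushforward[OF T0, of x0 p, folded pairing_def]
  show "(\<integral>x. x \<bullet> T x \<partial>N) \<le> (\<integral>x. x \<bullet> T0 x \<partial>N)"
    using integral_le_of_ennreal_le[OF int(1,3) _ fy_le bound_le] T0_eq int(2,4) by auto
  assume "(\<integral>x. x \<bullet> T x \<partial>N) = (\<integral>x. x \<bullet> T0 x \<partial>N)"
  then have "AE x in N. 0 \<le> pairing T x \<and> bound T x = ennreal (pairing T x)"
    using T0_eq int(2,4) measurable_compose[OF T(1) borel_measurable_conjugate_at[OF cont]]
      measurable_compose[OF id_N borel_measurable_tangent_gap[OF cont]]
    by (intro AE_eq_of_integral_eq_ennreal_le[OF int(1,3) _ _ fy_le bound_le])
       (auto simp: bound_def intro!: borel_measurable_add)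
  with grad show "AE x in N. T x = T0 x"
    by eventually_elim
      (auto simp: bound_def pairing_def intro: gderiv_eq_of_fenchel_young_eq[OF cvx d0[folded p_def]])
qed

end

lemma monge_solution_gderiv_convex:
  fixes \<mu> \<nu> :: "'a::euclidean_space measure"
  assumes prob: "prob_space \<mu>" and sets_\<mu>: "sets \<mu> = sets borel"
    and \<mu>_sq: "integrable \<mu> (\<lambda>x. (norm x)\<^sup>2)" and \<nu>_sq: "integrable \<nu> (\<lambda>y. (norm y)\<^sup>2)"
    and T0: "transport_map \<mu> \<nu> T0"
    and cvx: "convex_on UNIV \<phi>" and grad: "AE x in \<mu>. GDERIV \<phi> x :> T0 x"
  shows "monge_solution \<mu> \<nu> T0 \<and> (\<forall>T. monge_solution \<mu> \<nu> T \<longrightarrow> (AE x in \<mu>. T x = T0 x))"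
proof -
  let ?N = "completion \<mu>"
  have id_N: "(\<lambda>x. x) \<in> borel_measurable ?N"
    by (rule measurable_completion[OF measurable_ident_sets[OF sets_\<mu>]])
  have N_sq: "integrable ?N (\<lambda>x. (norm x)\<^sup>2)"
    using \<mu>_sq integrable_completion[of "\<lambda>x. (norm x)\<^sup>2" \<mu>] sets_\<mu> by (simp cong: measurable_cong_sets)
  note ot = prob_space.prob_space_completion[OF prob] id_N N_sq \<nu>_sq
  define cost where
    "cost T = (\<integral>x. (norm x)\<^sup>2 \<partial>?N) + (\<integral>y. (norm y)\<^sup>2 \<partial>\<nu>) - 2 * (\<integral>x. x \<bullet> T x \<partial>?N)" for T
  have quad_cost: "quad_cost \<mu> T = ennreal (cost T)" and cost_nonneg: "0 \<le> cost T"
    if "transport_map \<mu> \<nu> T" for T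
  proof -
    note sq = integral_square_dist_pushforward[OF ot, of T] that
    show "quad_cost \<mu> T = ennreal (cost T)"
      using sq nn_integral_eq_integral[of ?N "\<lambda>x. (norm (x - T x))\<^sup>2"]
      by (simp add: quad_cost_def transport_map_def cost_def)
    show "0 \<le> cost T"
      using sq integral_nonneg_AE[of "\<lambda>x. (norm (x - T x))\<^sup>2" ?N]
      by (simp add: transport_map_def cost_def)
  qed
  note correlation = integral_inner_le_gderiv_convex[OF ot _ _ _ _ cvx AE_completion[OF grad]]
  have opt: "quad_cost \<mu> T0 \<le> quad_cost \<mu> T" if T: "transport_map \<mu> \<nu> T" for T
    using correlation(1)[of T] T T0 by (auto simp: quad_cost transport_map_def cost_def intro!: ennreal_leI)
  have "AE x in \<mu>. T x = T0 x" if T: "monge_solution \<mu> \<nu> T" for T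
  proof -
    have Tt: "transport_map \<mu> \<nu> T"
      using T by (simp add: monge_solution_def)
    then have "quad_cost \<mu> T = quad_cost \<mu> T0"
      using T T0 opt by (auto simp: monge_solution_def intro: antisym)
    then have "cost T = cost T0"
      using quad_cost[OF Tt] quad_cost[OF T0] cost_nonneg[OF Tt] cost_nonneg[OF T0] by simp
    then have "AE x in ?N. T x = T0 x"
      using correlation(2)[of T] Tt T0 by (simp add: transport_map_def cost_def)
    then show ?thesis
      by (simp add: AE_completion_iff)
  qed
  with opt T0 show ?thesis
    by (simp add: monge_solution_def)
qed

section \<open>The counterfactual operator as a transport map\<close>

lemma distr_uniform_measure_indep:
  assumes prob: "prob_space M" and US: "US \<in> M \<rightarrow>\<^sub>M Ms" and UX: "UX \<in> M \<rightarrow>\<^sub>M Mx"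
    and ind: "prob_space.indep_var M Ms US Mx UX"
    and E: "E \<in> sets M" and A: "A \<in> sets Ms" and E_eq: "AE \<omega> in M. \<omega> \<in> E \<longleftrightarrow> US \<omega> \<in> A"
    and E_pos: "emeasure M E \<noteq> 0"
  shows "distr (uniform_measure M E) Mx UX = distr M Mx UX"
proof (rule measure_eqI)
  interpret prob_space M by (rule prob)
  fix B assume "B \<in> sets (distr (uniform_measure M E) Mx UX)"
  then have B: "B \<in> sets Mx" by simp
  define B' where "B' = UX -` B \<inter> space M"
  define A' where "A' = US -` A \<inter> space M"
  have B'_sets: "B' \<in> sets M" and A'_sets: "A' \<in> sets M"
    unfolding A'_def B'_def using measurable_sets[OF UX B] measurable_sets[OF US A] by auto
  have E_AE: "AE \<omega> in M. \<omega> \<in> E \<longleftrightarrow> \<omega> \<in> A'"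
    using E_eq by (rule eventually_mono) (auto simp: A'_def dest: sets.sets_into_space[OF E, THEN subsetD])
  have "emeasure (distr (uniform_measure M E) Mx UX) B = emeasure M (E \<inter> B') / emeasure M E"
    using UX B E B'_sets by (simp add: emeasure_distr B'_def cong: measurable_cong_sets)
  also have "emeasure M (E \<inter> B') = emeasure M (A' \<inter> B')"
    using E_AE E A'_sets B'_sets by (intro emeasure_eq_AE) auto
  also have "A' \<inter> B' = {\<omega> \<in> space M. US \<omega> \<in> A \<and> UX \<omega> \<in> B}"
    by (auto simp: A'_def B'_def)
  also have "emeasure M \<dots> = ennreal (prob E * prob B')"
    using indep_varD[OF ind A B] emeasure_eq_AE[OF E_AE E A'_sets]
    by (simp add: emeasure_eq_measure A'_def B'_def vimage_def Int_def conj_commute conj_left_commute)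
  also have "\<dots> / emeasure M E = ennreal (prob B')"
    using ennreal_mult_divide_eq[of "emeasure M E" "ennreal (prob B')"] E_pos
    by (simp add: emeasure_eq_measure ennreal_mult mult.commute)
  also have "\<dots> = emeasure (distr M Mx UX) B"
    using UX B by (simp add: emeasure_eq_measure emeasure_distr B'_def)
  finally show "emeasure (distr (uniform_measure M E) Mx UX) B = emeasure (distr M Mx UX) B" .
qed simp

lemma distr_uniform_measure_AE_comp:
  assumes UX: "UX \<in> M \<rightarrow>\<^sub>M PX" and K: "K \<in> PX \<rightarrow>\<^sub>M borel" and f: "f \<in> borel_measurable M"
    and law: "distr (uniform_measure M E) PX UX = distr M PX UX"
    and ae: "AE \<omega> in uniform_measure M E. f \<omega> = K (UX \<omega>)"
  shows "distr (uniform_measure M E) borel f = distr M borel (\<lambda>\<omega>. K (UX \<omega>))"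
proof -
  have UX_E: "UX \<in> uniform_measure M E \<rightarrow>\<^sub>M PX"
    using UX by (simp cong: measurable_cong_sets)
  have "distr (uniform_measure M E) borel f = distr (uniform_measure M E) borel (\<lambda>\<omega>. K (UX \<omega>))"
    using f measurable_compose[OF UX_E K] ae
    by (intro distr_cong_AE) (auto cong: measurable_cong_sets)
  also have "\<dots> = distr (distr (uniform_measure M E) PX UX) borel K"
    using distr_distr[OF K UX_E] by (simp add: o_def)
  also have "\<dots> = distr M borel (\<lambda>\<omega>. K (UX \<omega>))"
    using distr_distr[OF K UX] law by (simp add: o_def)
  finally show ?thesis .
qed

lemma transport_map_cf_operator:
  fixes X :: "'a \<Rightarrow> 'b::euclidean_space"
  assumes X: "X \<in> borel_measurable M" and S: "S \<in> borel_measurable M" and UX: "UX \<in> M \<rightarrow>\<^sub>M PX"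
    and F: "F s' \<in> PX \<rightarrow>\<^sub>M borel"
    and obs: "AE \<omega> in M. X \<omega> = F (S \<omega>) (UX \<omega>)"
    and UX_D: "\<And>\<omega>. \<omega> \<in> space M \<Longrightarrow> UX \<omega> \<in> D" and inj: "inj_on (F s) D"
    and law: "\<And>t. t \<in> {s, s'} \<Longrightarrow>
                distr (uniform_measure M {\<omega>\<in>space M. S \<omega> = t}) PX UX = distr M PX UX"
    and g: "g \<in> borel_measurable borel"
    and g_ae: "AE x in cond_law M X S s. cf_operator F D s' s x = g x"
  shows "transport_map (cond_law M X S s) (cond_law M X S s') (cf_operator F D s' s)"
proof -
  define E where "E t = {\<omega>\<in>space M. S \<omega> = t}" for t
  have E: "E t \<in> sets M" for t
    using measurable_sets[OF S borel_closed[OF closed_singleton], of t]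
    by (simp add: E_def vimage_def Int_def conj_commute)
  have X_E: "X \<in> borel_measurable (uniform_measure M (E t))" for t
    using X by (simp cong: measurable_cong_sets)
  have obs_E: "AE \<omega> in uniform_measure M (E t). X \<omega> = F t (UX \<omega>)" for t
    using obs by (intro AE_uniform_measureI[OF E]) (auto simp: E_def elim: eventually_mono)
  have "AE \<omega> in uniform_measure M (E s). \<omega> \<in> space M"
    using AE_space[of "uniform_measure M (E s)"] by simp
  moreover have "AE \<omega> in uniform_measure M (E s). cf_operator F D s' s (X \<omega>) = g (X \<omega>)"
    using g_ae unfolding cond_law_def E_def[symmetric] by (rule AE_distrD[OF X_E])
  ultimately have g_X: "AE \<omega> in uniform_measure M (E s). g (X \<omega>) = F s' (UX \<omega>)"
    using obs_E[of s] by eventually_elim (simp add: cf_operator_def the_inv_into_f_f[OF inj] UX_D)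
  have g_\<mu>: "g \<in> borel_measurable (cond_law M X S s)"
    using g by (simp add: cond_law_def cong: measurable_cong_sets)
  have "distr (completion (cond_law M X S s)) borel (cf_operator F D s' s)
      = distr (cond_law M X S s) borel g"
    by (rule distr_completion_AE_eq[OF g_\<mu> g_ae])
  also have "\<dots> = distr (uniform_measure M (E s)) borel (\<lambda>\<omega>. g (X \<omega>))"
    using distr_distr[OF g X_E] by (simp add: cond_law_def E_def o_def)
  also have "\<dots> = distr M borel (\<lambda>\<omega>. F s' (UX \<omega>))"
    using X g g_X law[of s] by (intro distr_uniform_measure_AE_comp[OF UX F]) (auto simp: E_def)
  also have "\<dots> = cond_law M X S s'"
    unfolding cond_law_def using X obs_E[of s'] law[of s'] unfolding E_def
    by (intro distr_uniform_measure_AE_comp[OF UX F, symmetric]) auto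
  finally show ?thesis
    unfolding transport_map_def using measurable_completion_AE_eq[OF g_\<mu> g_ae] by simp
qed

lemma distr_uniform_measure_indep_fun:
  fixes S :: "'a \<Rightarrow> 'b::t1_space"
  assumes prob: "prob_space M" and US: "US \<in> M \<rightarrow>\<^sub>M Ms" and UX: "UX \<in> M \<rightarrow>\<^sub>M Mx"
    and ind: "prob_space.indep_var M Ms US Mx UX"
    and S: "S \<in> borel_measurable M" and h: "h \<in> Ms \<rightarrow>\<^sub>M borel" and S_h: "AE \<omega> in M. S \<omega> = h (US \<omega>)"
    and pos: "measure M {\<omega>\<in>space M. S \<omega> = t} > 0"
  shows "distr (uniform_measure M {\<omega>\<in>space M. S \<omega> = t}) Mx UX = distr M Mx UX"
proof (rule distr_uniform_measure_indep[OF prob US UX ind])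
  interpret prob_space M by (rule prob)
  show "{\<omega>\<in>space M. S \<omega> = t} \<in> sets M"
    using measurable_sets[OF S borel_closed[OF closed_singleton], of t]
    by (simp add: vimage_def Int_def conj_commute)
  show "h -` {t} \<inter> space Ms \<in> sets Ms"
    using measurable_sets[OF h borel_closed[OF closed_singleton]] .
  show "AE \<omega> in M. \<omega> \<in> {\<omega>\<in>space M. S \<omega> = t} \<longleftrightarrow> US \<omega> \<in> h -` {t} \<inter> space Ms"
    using S_h AE_space by eventually_elim (use measurable_space[OF US] in auto)
  show "emeasure M {\<omega>\<in>space M. S \<omega> = t} \<noteq> 0"
    using pos by (simp add: emeasure_eq_measure)
qed

lemma prob_space_cond_law:
  assumes prob: "prob_space M" and X: "X \<in> borel_measurable M" and S: "S \<in> borel_measurable M"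
    and pos: "measure M {\<omega>\<in>space M. S \<omega> = t} > 0"
  shows "prob_space (cond_law M X S t)"
proof -
  interpret prob_space M by (rule prob)
  have "{\<omega>\<in>space M. S \<omega> = t} \<in> sets M"
    using measurable_sets[OF S borel_closed[OF closed_singleton], of t]
    by (simp add: vimage_def Int_def conj_commute)
  then have "prob_space (uniform_measure M {\<omega>\<in>space M. S \<omega> = t})"
    using pos by (intro prob_space_uniform_measure) (auto simp: emeasure_eq_measure)
  moreover have "X \<in> borel_measurable (uniform_measure M {\<omega>\<in>space M. S \<omega> = t})"
    using X by (simp cong: measurable_cong_sets)
  ultimately show ?thesis
    unfolding cond_law_def by (rule prob_space.prob_space_distr)
qed

lemma measurable_real_vec_space_UNIV:
  "(\<lambda>u. u) \<in> real_vec_space I \<rightarrow>\<^sub>M real_vec_space UNIV"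
proof -
  have "(\<lambda>u. u i) \<in> real_vec_space I \<rightarrow>\<^sub>M borel" for i
  proof (cases "i \<in> I")
    case False
    have "(\<lambda>u. undefined) \<in> real_vec_space I \<rightarrow>\<^sub>M (borel :: real measure)"
      by simp
    moreover have "undefined = u i" if "u \<in> space (real_vec_space I)" for u
      using False that by (auto simp: space_PiM PiE_def extensional_def)
    ultimately show ?thesis
      by (rule measurable_cong[THEN iffD1, rotated])
  qed simp
  then show ?thesis
    by (intro measurable_PiM_single') auto
qed

lemma scm_graph_acyclic_not_self_parent:
  "acyclic (scm_graph Endo Exo) \<Longrightarrow> i \<notin> Endo i"
  unfolding acyclic_def scm_graph_def by blast

lemma scm_solution_parentless:
  assumes wf: "scm_wf Usp Endo Exo G" and sol: "scm_solution M U G V" and root: "Endo i = {}"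
  obtains h where "h \<in> borel_measurable (real_vec_space (Exo i))"
    and "AE \<omega> in M. V \<omega> i = h (restrict (U \<omega>) (Exo i))"
proof
  have "(\<lambda>u. ((\<lambda>_. 0), u)) \<in> real_vec_space (Exo i) \<rightarrow>\<^sub>M real_vec_space UNIV \<Otimes>\<^sub>M real_vec_space UNIV"
    by (intro measurable_Pair measurable_const measurable_real_vec_space_UNIV) (simp add: space_PiM)
  moreover have "(\<lambda>(v, u). G i v u) \<in> borel_measurable (real_vec_space UNIV \<Otimes>\<^sub>M real_vec_space UNIV)"
    using wf by (simp add: scm_wf_def)
  ultimately have "(\<lambda>u. (\<lambda>(v, u). G i v u) ((\<lambda>_. 0), u)) \<in> borel_measurable (real_vec_space (Exo i))"
    by (rule measurable_compose)
  then show "(\<lambda>u. G i (\<lambda>_. 0) u) \<in> borel_measurable (real_vec_space (Exo i))"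
    by simp
  have parents: "\<forall>k\<in>Endo i. v k = v' k \<Longrightarrow> \<forall>j\<in>Exo i. u j = u' j \<Longrightarrow> G i v u = G i v' u'"
    for v v' u u'
    using wf by (auto simp: scm_wf_def)
  have "G i v u = G i (\<lambda>_. 0) (restrict u (Exo i))" for v u
    using root by (intro parents) auto
  with sol show "AE \<omega> in M. V \<omega> i = G i (\<lambda>_. 0) (restrict (U \<omega>) (Exo i))"
    unfolding scm_solution_def by (auto elim: eventually_mono)
qed

lemma borel_measurable_vec_lambda:
  fixes f :: "'a \<Rightarrow> real ^ 'd::finite"
  assumes "\<And>i. (\<lambda>x. f x $ i) \<in> borel_measurable M"
  shows "f \<in> borel_measurable M"
proof (rule iffD2[OF borel_measurable_euclidean_space], rule ballI)
  fix b :: "real ^ 'd" assume "b \<in> Basis"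
  then obtain i where "b = axis i 1"
    using axis_inverse by blast
  then show "(\<lambda>x. f x \<bullet> b) \<in> borel_measurable M"
    using assms[of i] by (simp only: cart_eq_inner_axis)
qed

lemma measurable_Xof:
  assumes "V \<in> M \<rightarrow>\<^sub>M real_vec_space UNIV"
  shows "Xof V \<in> borel_measurable M"
  unfolding Xof_def
  using measurable_compose[OF assms measurable_component_singleton[of "Some _" UNIV "\<lambda>_. borel"]]
  by (intro borel_measurable_vec_lambda) simp

lemma measurable_Sof:
  assumes "V \<in> M \<rightarrow>\<^sub>M real_vec_space UNIV"
  shows "Sof V \<in> borel_measurable M"
  unfolding Sof_def
  using measurable_compose[OF assms measurable_component_singleton[of None UNIV "\<lambda>_. borel"]] by simp

theorem theorem1:
  fixes M :: "'a measure"
    and Usp :: "'j::finite \<Rightarrow> real set"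
    and Endo :: "'d::finite option \<Rightarrow> 'd option set"
    and Exo :: "'d option \<Rightarrow> 'j set"
    and G :: "'d option \<Rightarrow> ('d option \<Rightarrow> real) \<Rightarrow> ('j \<Rightarrow> real) \<Rightarrow> real"
    and U :: "'a \<Rightarrow> 'j \<Rightarrow> real"
    and V :: "'a \<Rightarrow> 'd option \<Rightarrow> real"
    and Vdo :: "real \<Rightarrow> 'a \<Rightarrow> 'd option \<Rightarrow> real"
    and Sset :: "real set"
    and F :: "real \<Rightarrow> ('j \<Rightarrow> real) \<Rightarrow> real ^ 'd"
    and \<phi> :: "real ^ 'd \<Rightarrow> real"
    and s s' :: real
  assumes prob: "prob_space M"
    and wf: "scm_wf Usp Endo Exo G"
    and U_rv: "exo_random_vector M Usp U"
    and sol: "scm_solution M U G V"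
    and A: "acyclic (scm_graph Endo Exo)"
    and Sset_fin: "finite Sset"
    and S_vals: "\<forall>\<omega>\<in>space M. Sof V \<omega> \<in> Sset"
    and S_pos: "\<forall>t\<in>Sset. measure M {\<omega>\<in>space M. Sof V \<omega> = t} > 0"
    and do_sol: "\<forall>t\<in>Sset. scm_solution M U (do_intervention G {None} (\<lambda>_. t)) (Vdo t)"
    and F_meas: "(\<lambda>(t, u). F t u) \<in> borel_measurable (borel \<Otimes>\<^sub>M real_vec_space (UX_idx Exo))"
    and F_obs: "AE \<omega> in M. Xof V \<omega> = F (Sof V \<omega>) (restrict (U \<omega>) (UX_idx Exo))"
    and F_do: "\<forall>t\<in>Sset. AE \<omega> in M. Xof (Vdo t) \<omega> = F t (restrict (U \<omega>) (UX_idx Exo))"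
    and RE_indep: "prob_space.indep_var M
                     (real_vec_space (US_idx Exo)) (\<lambda>\<omega>. restrict (U \<omega>) (US_idx Exo))
                     (real_vec_space (UX_idx Exo)) (\<lambda>\<omega>. restrict (U \<omega>) (UX_idx Exo))"
    and RE_parents: "\<forall>k. Some k \<notin> Endo None"
    and I: "\<forall>t\<in>Sset. inj_on (F t) (PiE (UX_idx Exo) Usp)"
    and ac: "\<forall>t\<in>Sset. absolutely_continuous lborel (cond_law M (Xof V) (Sof V) t)"
    and mom2: "\<forall>t\<in>Sset. integrable (cond_law M (Xof V) (Sof V) t) (\<lambda>x. (norm x)\<^sup>2)"
    and s_in: "s \<in> Sset" and s'_in: "s' \<in> Sset"
    and cvx: "convex_on UNIV \<phi>"
    and grad: "AE x in cond_law M (Xof V) (Sof V) s.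
                 GDERIV \<phi> x :> cf_operator F (PiE (UX_idx Exo) Usp) s' s x"
  shows "monge_solution (cond_law M (Xof V) (Sof V) s) (cond_law M (Xof V) (Sof V) s')
           (cf_operator F (PiE (UX_idx Exo) Usp) s' s)
       \<and> (\<forall>T. monge_solution (cond_law M (Xof V) (Sof V) s) (cond_law M (Xof V) (Sof V) s') T
              \<longrightarrow> (AE x in cond_law M (Xof V) (Sof V) s.
                     T x = cf_operator F (PiE (UX_idx Exo) Usp) s' s x))"
proof -
  interpret M: prob_space M by (rule prob)
  let ?UX = "\<lambda>\<omega>. restrict (U \<omega>) (UX_idx Exo)" and ?US = "\<lambda>\<omega>. restrict (U \<omega>) (US_idx Exo)"
  let ?\<mu> = "cond_law M (Xof V) (Sof V)" and ?T = "cf_operator F (PiE (UX_idx Exo) Usp) s' s"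
  have V: "V \<in> M \<rightarrow>\<^sub>M real_vec_space UNIV" and U: "U \<in> M \<rightarrow>\<^sub>M real_vec_space UNIV"
    using sol U_rv by (auto simp: scm_solution_def exo_random_vector_def)
  have UX: "?UX \<in> M \<rightarrow>\<^sub>M real_vec_space (UX_idx Exo)" and US: "?US \<in> M \<rightarrow>\<^sub>M real_vec_space (US_idx Exo)"
    using U by (auto intro: measurable_compose[OF _ measurable_restrict_subset])
  have "Endo None = {}"
    using scm_graph_acyclic_not_self_parent[OF A, of None] RE_parents by (metis not_None_eq subsetI subset_empty)
  then obtain h where h: "h \<in> borel_measurable (real_vec_space (US_idx Exo))"
    and S_h: "AE \<omega> in M. Sof V \<omega> = h (?US \<omega>)"
    using scm_solution_parentless[OF wf sol] unfolding Sof_def US_idx_def by blast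
  have law: "distr (uniform_measure M {\<omega>\<in>space M. Sof V \<omega> = t}) (real_vec_space (UX_idx Exo)) ?UX
      = distr M (real_vec_space (UX_idx Exo)) ?UX" if "t \<in> {s, s'}" for t
    using that s_in s'_in S_pos S_h
    by (intro distr_uniform_measure_indep_fun[OF prob US UX RE_indep measurable_Sof[OF V] h]) auto
  have F_s': "F s' \<in> real_vec_space (UX_idx Exo) \<rightarrow>\<^sub>M borel"
    using measurable_compose[OF measurable_Pair1'[of s' borel] F_meas] by simp
  have cont: "continuous_on UNIV \<phi>"
    by (rule convex_on_continuous[OF open_UNIV cvx])
  have "AE x in ?\<mu> s. ?T x = gradient_limit \<phi> x"
    using grad by eventually_elim (simp add: gradient_limit_eq)
  then have "transport_map (?\<mu> s) (?\<mu> s') ?T"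
    using U_rv I s_in
    by (intro transport_map_cf_operator[OF measurable_Xof[OF V] measurable_Sof[OF V] UX F_s' F_obs
          _ _ law borel_measurable_gradient_limit[OF cont]]) (auto simp: exo_random_vector_def)
  moreover have "prob_space (?\<mu> s)"
    using S_pos s_in by (intro prob_space_cond_law[OF prob measurable_Xof[OF V] measurable_Sof[OF V]]) auto
  ultimately show ?thesis
    using mom2 s_in s'_in by (intro monge_solution_gderiv_convex[OF _ _ _ _ _ cvx grad]) (auto simp: cond_law_def)
qed

end
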